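(* With $\hat Q=\eta_0\mathcal X+\hat d$, $\mathcal X$, $\mathcal P=\gamma_0$ and the tilded oscillators as in the context, the state space (restricted to $b_0=0$) decomposes as (tilded-oscillator Fock space without zero modes) $\otimes$ ($\mathcal X,\mathcal P$ module) $\otimes$ ($\zeta_0,\eta_0$ module). Consider the two sectors built on $|\mathcal X=0\rangle$ (states $\sum_n|\psi_n\rangle\otimes\mathcal P^n|\mathcal X=0\rangle$) and on $|\mathcal P=0\rangle$ (states $\sum_n|\psi_n\rangle\otimes\mathcal X^n|\mathcal P=0\rangle$), with $|\psi_n\rangle$ arbitrary in the remaining factors. Then every class in the cohomology of $\hat Q$ in the first sector is represented by a state $|\psi\rangle\otimes|\mathcal X=0\rangle\otimes|\downarrow\rangle_{\zeta\eta}$, and every class in the second sector by a state $|\psi\rangle\otimes|\mathcal P=0\rangle\otimes|\uparrow\rangle_{\zeta\eta}$, where $|\psi\rangle$ is $\hat d$-closed in the Fock space of the tilded oscillators without zero modes; moreover two such representatives are $\hat Q$-cohomologous if and only if their $|\psi\rangle$'s differ by a $\hat d$-exact state. Hence in each sector the cohomology of $\hat Q$ is isomorphic to the cohomology of $\hat d$ on the Fock space of the tilded oscillators without zero modes.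
   Context: Modes: $x_n,\varphi_n$ with $[x_m,x_n]=[\varphi_m,\varphi_n]=m\delta_{m+n,0}$; fermionic $b_n,c_n$, $\{b_m,c_n\}=\delta_{m+n,0}$; fermionic $\zeta_n,\eta_n$, $\{\zeta_m,\eta_n\}=\delta_{m+n,0}$; bosonic $\beta_n,\gamma_n$, $[\gamma_m,\beta_n]=\delta_{m+n,0}$. $\hat Q$ is the relative BRST operator (the part of the light-cone BRST operator $Q_B$ without $b_0,c_0$), decomposed as $\hat Q=\eta_0\mathcal X+\hat d$ with $\mathcal X=\beta_0+\sum_{n\ne0}n\,c_n\zeta_{-n}$ and $\hat d$ independent of $\zeta_0,\eta_0$; $\mathcal P=\gamma_0$ so $[\mathcal X,\mathcal P]=1$. Tilded oscillators: $\tilde b_n=b_n+n\zeta_n\gamma_0$, $\tilde\eta_n=\eta_n+nc_n\gamma_0$ ($n\ne0$); these, with $c_n,\zeta_n,\beta_n,\gamma_n$ ($n\ne0$), commute with $\mathcal X,\mathcal P$, and $\hat d$ commutes with $\mathcal X$ and $\mathcal P$. $|\mathcal X=0\rangle$ is annihilated by $\mathcal X$, $|\mathcal P=0\rangle$ by $\mathcal P$. The $\zeta_0,\eta_0$ states: $\zeta_0|\downarrow\rangle_{\zeta\eta}=0$, $\eta_0|\uparrow\rangle_{\zeta\eta}=0$, $|\uparrow\rangle=\eta_0|\downarrow\rangle$. *)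

theory Defs
  imports Complex_Main "HOL-Library.Product_Plus" "HOL-Library.Function_Algebras"
begin

text \<open>
Model of the state space (b_0 = 0) as
  (zeta_0,eta_0 module) (x) (X,P module) (x) (Fock space H of tilded oscillators w/o zero modes).
A state of a sector is a pair (u, w) of coefficient sequences in H:
  u n = coefficient of  |down> (x) e_n,   w n = coefficient of  |up> (x) e_n,
where e_n = P^n |X=0> in sector 1 and e_n = X^n |P=0> in sector 2.
States are finite sums, i.e. the sequences are finitely supported.
\<close>

type_synonym 'h sector_state = "(nat \<Rightarrow> 'h) \<times> (nat \<Rightarrow> 'h)"

definition fin_states :: "'h::zero sector_state set" where
  "fin_states = {(u, w). finite {n. u n \<noteq> 0} \<and> finite {n. w n \<noteq> 0}}"

text \<open>X on sector 1: X P^n|X=0> = n P^(n-1)|X=0>.  X on sector 2: X X^n|P=0> = X^(n+1)|P=0>.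
eta_0 maps down to up and kills up.  The odd operator d acts on H and picks up the
Koszul sign (-1) when passing the odd state |up>, so that d anticommutes with eta_0.\<close>

definition X1 :: "(nat \<Rightarrow> 'h::real_vector) \<Rightarrow> nat \<Rightarrow> 'h" where
  "X1 u = (\<lambda>n. real (Suc n) *\<^sub>R u (Suc n))"

definition X2 :: "(nat \<Rightarrow> 'h::real_vector) \<Rightarrow> nat \<Rightarrow> 'h" where
  "X2 u = (\<lambda>n. case n of 0 \<Rightarrow> 0 | Suc m \<Rightarrow> u m)"

definition Qhat :: "((nat \<Rightarrow> 'h) \<Rightarrow> nat \<Rightarrow> 'h) \<Rightarrow> ('h \<Rightarrow> 'h) \<Rightarrow> 'h::real_vector sector_state \<Rightarrow> 'h sector_state" where
  "Qhat X d s = (\<lambda>n. d (fst s n), \<lambda>n. X (fst s) n - d (snd s n))"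

definition rep_down :: "'h::zero \<Rightarrow> 'h sector_state" where
  "rep_down \<psi> = (\<lambda>n. if n = 0 then \<psi> else 0, \<lambda>n. 0)"

definition rep_up :: "'h::zero \<Rightarrow> 'h sector_state" where
  "rep_up \<psi> = (\<lambda>n. 0, \<lambda>n. if n = 0 then \<psi> else 0)"

end

theory Submission
  imports Defs
begin

text \<open>
Write a state as |down> (x) u + |up> (x) w, so that Q maps it to
|down> (x) d u + |up> (x) (X u - d w); the proof is a contracting homotopy in the (X,P) factor.
On the sector built on |X=0>, X acts as d/dP and is onto: subtracting Q(|down> (x) a) for an
X-primitive a of w leaves a closed state with only a P-independent |down>-component.
On the sector built on |P=0>, X acts by multiplication and closedness gives X u = d w, so
subtracting Q(|down> (x) X^-1 w') with w' = w minus its X^0-part leaves only that X^0-part,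
an |up>-component.
\<close>

lemma finite_support_at_0: "finite {n::nat. (if n = 0 then x else 0) \<noteq> 0}"
  by (rule finite_subset[of _ "{0}"]) auto

lemma rep_down_in_fin_states: "rep_down \<psi> \<in> fin_states"
  by (simp add: rep_down_def fin_states_def finite_support_at_0)

lemma rep_up_in_fin_states: "rep_up \<psi> \<in> fin_states"
  by (simp add: rep_up_def fin_states_def finite_support_at_0)

lemma rep_down_diff:
  fixes \<psi> :: "'h::ab_group_add"
  shows "rep_down (\<psi> - \<psi>') = rep_down \<psi> - rep_down \<psi>'"
  by (simp add: rep_down_def fun_eq_iff)

lemma rep_up_diff:
  fixes \<psi> :: "'h::ab_group_add"
  shows "rep_up (\<psi> - \<psi>') = rep_up \<psi> - rep_up \<psi>'"
  by (simp add: rep_up_def fun_eq_iff)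

lemma Qhat_X1_rep_down:
  assumes "linear d"
  shows "Qhat X1 d (rep_down \<psi>) = rep_down (d \<psi>)"
  using linear_0[OF assms] by (simp add: Qhat_def X1_def rep_down_def fun_eq_iff)

lemma Qhat_X2_rep_up:
  assumes "linear d"
  shows "Qhat X2 d (rep_up \<psi>) = rep_up (- d \<psi>)"
  using linear_0[OF assms] by (simp add: Qhat_def X2_def rep_up_def fun_eq_iff split: nat.split)

lemma Qhat_diff:
  assumes "linear d"
  shows "s - Qhat X d (a, \<lambda>_. 0) = (\<lambda>n. fst s n - d (a n), \<lambda>n. snd s n - X a n)"
  using linear_0[OF assms] by (cases s) (simp add: Qhat_def fun_eq_iff)

definition X1_primitive :: "(nat \<Rightarrow> 'h::real_vector) \<Rightarrow> nat \<Rightarrow> 'h" where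
  "X1_primitive w = (\<lambda>n. case n of 0 \<Rightarrow> 0 | Suc m \<Rightarrow> inverse (real (Suc m)) *\<^sub>R w m)"

lemma X1_X1_primitive: "X1 (X1_primitive w) = w"
  by (simp add: X1_def X1_primitive_def fun_eq_iff)

lemma finite_support_X1_primitive:
  assumes "finite {n. w n \<noteq> 0}"
  shows "finite {n. X1_primitive w n \<noteq> 0}"
proof (rule finite_subset)
  show "{n. X1_primitive w n \<noteq> 0} \<subseteq> Suc ` {n. w n \<noteq> 0}"
    by (auto simp: X1_primitive_def gr0_conv_Suc split: nat.splits)
qed (use assms in simp)

lemma X2_shift: "X2 (\<lambda>n. w (Suc n)) n = (if n = 0 then 0 else w n)"
  by (simp add: X2_def split: nat.split)

lemma finite_support_shift:
  assumes "finite {n. w n \<noteq> 0}"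
  shows "finite {n. w (Suc n) \<noteq> 0}"
  using finite_vimageI[OF assms inj_Suc] by (simp add: vimage_def)

lemma Qhat_X1_closed_cohomologous_rep_down:
  fixes d :: "'h::real_vector \<Rightarrow> 'h"
  assumes lin: "linear d" and s: "s \<in> fin_states" and closed: "Qhat X1 d s = (0, 0)"
  shows "\<exists>\<psi> t. d \<psi> = 0 \<and> t \<in> fin_states \<and> s = rep_down \<psi> + Qhat X1 d t"
proof -
  obtain u w where s_eq: "s = (u, w)" by (cases s)
  have du: "d (u n) = 0" and X1u: "real (Suc n) *\<^sub>R u (Suc n) = d (w n)" for n
    using closed by (auto simp: s_eq Qhat_def X1_def fun_eq_iff zero_prod_def)
  define a where "a = X1_primitive w"
  have X1a: "X1 a = w" by (simp add: a_def X1_X1_primitive)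
  have t: "(a, \<lambda>_. 0) \<in> fin_states"
    using s by (simp add: s_eq fin_states_def a_def finite_support_X1_primitive)
  have da: "d (a n) = (if n = 0 then 0 else u n)" for n
  proof (cases n)
    case (Suc m)
    have "d (a n) = inverse (real (Suc m)) *\<^sub>R d (w m)"
      using Suc by (simp add: a_def X1_primitive_def linear_scale[OF lin])
    also have "\<dots> = u n"
      using X1u[of m, symmetric] Suc by simp
    finally show ?thesis using Suc by simp
  qed (simp add: a_def X1_primitive_def linear_0[OF lin])
  have "s - Qhat X1 d (a, \<lambda>_. 0) = rep_down (u 0)"
    by (simp add: Qhat_diff[OF lin] s_eq da X1a rep_down_def fun_eq_iff)
  then have "s = rep_down (u 0) + Qhat X1 d (a, \<lambda>_. 0)"
    by (simp add: algebra_simps)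
  with du t show ?thesis by blast
qed

lemma Qhat_X2_closed_cohomologous_rep_up:
  fixes d :: "'h::real_vector \<Rightarrow> 'h"
  assumes lin: "linear d" and s: "s \<in> fin_states" and closed: "Qhat X2 d s = (0, 0)"
  shows "\<exists>\<psi> t. d \<psi> = 0 \<and> t \<in> fin_states \<and> s = rep_up \<psi> + Qhat X2 d t"
proof -
  obtain u w where s_eq: "s = (u, w)" by (cases s)
  have X2u: "X2 u n = d (w n)" for n
    using closed by (auto simp: s_eq Qhat_def fun_eq_iff zero_prod_def)
  have dw0: "d (w 0) = 0"
    using X2u[of 0] by (simp add: X2_def)
  have u: "u n = d (w (Suc n))" for n
    using X2u[of "Suc n"] by (simp add: X2_def)
  define a where "a = (\<lambda>n. w (Suc n))"
  have t: "(a, \<lambda>_. 0) \<in> fin_states"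
    using s by (simp add: s_eq fin_states_def a_def finite_support_shift)
  have "s - Qhat X2 d (a, \<lambda>_. 0) = rep_up (w 0)"
    by (simp add: Qhat_diff[OF lin] s_eq a_def u[symmetric] X2_shift rep_up_def fun_eq_iff)
  then have "s = rep_up (w 0) + Qhat X2 d (a, \<lambda>_. 0)"
    by (simp add: algebra_simps)
  with dw0 t show ?thesis by blast
qed

lemma rep_down_Qhat_X1_exact_iff:
  assumes lin: "linear d"
  shows "(\<exists>t\<in>fin_states. rep_down \<psi> = Qhat X1 d t) \<longleftrightarrow> (\<exists>\<chi>. \<psi> = d \<chi>)"
proof
  assume "\<exists>t\<in>fin_states. rep_down \<psi> = Qhat X1 d t"
  then obtain t where "rep_down \<psi> = Qhat X1 d t" by blast
  then have "fst (rep_down \<psi>) 0 = fst (Qhat X1 d t) 0" by simp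
  then show "\<exists>\<chi>. \<psi> = d \<chi>" by (auto simp: rep_down_def Qhat_def)
next
  assume "\<exists>\<chi>. \<psi> = d \<chi>"
  then show "\<exists>t\<in>fin_states. rep_down \<psi> = Qhat X1 d t"
    using Qhat_X1_rep_down[OF lin] rep_down_in_fin_states by metis
qed

lemma rep_up_Qhat_X2_exact_iff:
  assumes lin: "linear d"
  shows "(\<exists>t\<in>fin_states. rep_up \<psi> = Qhat X2 d t) \<longleftrightarrow> (\<exists>\<chi>. \<psi> = d \<chi>)"
proof
  assume "\<exists>t\<in>fin_states. rep_up \<psi> = Qhat X2 d t"
  then obtain t where "rep_up \<psi> = Qhat X2 d t" by blast
  then have "snd (rep_up \<psi>) 0 = snd (Qhat X2 d t) 0" by simp
  then have "\<psi> = d (- snd t 0)"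
    by (simp add: rep_up_def Qhat_def X2_def linear_neg[OF lin])
  then show "\<exists>\<chi>. \<psi> = d \<chi>" by blast
next
  assume "\<exists>\<chi>. \<psi> = d \<chi>"
  then obtain \<chi> where "\<psi> = d \<chi>" by blast
  then have "rep_up \<psi> = Qhat X2 d (rep_up (- \<chi>))"
    by (simp add: Qhat_X2_rep_up[OF lin] linear_neg[OF lin])
  then show "\<exists>t\<in>fin_states. rep_up \<psi> = Qhat X2 d t"
    using rep_up_in_fin_states by blast
qed

theorem theorem2:
  fixes d :: "'h::real_vector \<Rightarrow> 'h"
  assumes lin: "linear d"
    and nil: "\<And>\<psi>. d (d \<psi>) = 0"
  shows
    \<comment> \<open>sector built on |X=0>\<close>
    "(\<forall>\<psi>. d \<psi> = 0 \<longrightarrow> rep_down \<psi> \<in> fin_states \<and> Qhat X1 d (rep_down \<psi>) = (0, 0))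
   \<and> (\<forall>s\<in>fin_states. Qhat X1 d s = (0, 0) \<longrightarrow>
        (\<exists>\<psi> t. d \<psi> = 0 \<and> t \<in> fin_states \<and> s = rep_down \<psi> + Qhat X1 d t))
   \<and> (\<forall>\<psi> \<psi>'. d \<psi> = 0 \<longrightarrow> d \<psi>' = 0 \<longrightarrow>
        ((\<exists>t\<in>fin_states. rep_down \<psi> - rep_down \<psi>' = Qhat X1 d t) \<longleftrightarrow> (\<exists>\<chi>. \<psi> - \<psi>' = d \<chi>)))
   \<and> \<comment> \<open>sector built on |P=0>\<close>
     (\<forall>\<psi>. d \<psi> = 0 \<longrightarrow> rep_up \<psi> \<in> fin_states \<and> Qhat X2 d (rep_up \<psi>) = (0, 0))
   \<and> (\<forall>s\<in>fin_states. Qhat X2 d s = (0, 0) \<longrightarrow>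
        (\<exists>\<psi> t. d \<psi> = 0 \<and> t \<in> fin_states \<and> s = rep_up \<psi> + Qhat X2 d t))
   \<and> (\<forall>\<psi> \<psi>'. d \<psi> = 0 \<longrightarrow> d \<psi>' = 0 \<longrightarrow>
        ((\<exists>t\<in>fin_states. rep_up \<psi> - rep_up \<psi>' = Qhat X2 d t) \<longleftrightarrow> (\<exists>\<chi>. \<psi> - \<psi>' = d \<chi>)))"
proof (intro conjI allI impI ballI)
  have zero: "rep_down 0 = (0, 0)" "rep_up 0 = (0, 0)"
    by (simp_all add: rep_down_def rep_up_def zero_prod_def zero_fun_def)
  fix \<psi> \<psi>' :: 'h
  show "rep_down \<psi> \<in> fin_states" "rep_up \<psi> \<in> fin_states"
    by (simp_all add: rep_down_in_fin_states rep_up_in_fin_states)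
  assume "d \<psi> = 0"
  then show "Qhat X1 d (rep_down \<psi>) = (0, 0)" "Qhat X2 d (rep_up \<psi>) = (0, 0)"
    by (simp_all add: Qhat_X1_rep_down[OF lin] Qhat_X2_rep_up[OF lin] zero)
  show "(\<exists>t\<in>fin_states. rep_down \<psi> - rep_down \<psi>' = Qhat X1 d t) \<longleftrightarrow> (\<exists>\<chi>. \<psi> - \<psi>' = d \<chi>)"
    "(\<exists>t\<in>fin_states. rep_up \<psi> - rep_up \<psi>' = Qhat X2 d t) \<longleftrightarrow> (\<exists>\<chi>. \<psi> - \<psi>' = d \<chi>)"
    by (simp_all only: rep_down_diff[symmetric] rep_up_diff[symmetric]
        rep_down_Qhat_X1_exact_iff[OF lin] rep_up_Qhat_X2_exact_iff[OF lin])
next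
  fix s :: "'h sector_state"
  assume s: "s \<in> fin_states"
  show "\<exists>\<psi> t. d \<psi> = 0 \<and> t \<in> fin_states \<and> s = rep_down \<psi> + Qhat X1 d t"
    if "Qhat X1 d s = (0, 0)"
    using lin s that by (rule Qhat_X1_closed_cohomologous_rep_down)
  show "\<exists>\<psi> t. d \<psi> = 0 \<and> t \<in> fin_states \<and> s = rep_up \<psi> + Qhat X2 d t"
    if "Qhat X2 d s = (0, 0)"
    using lin s that by (rule Qhat_X2_closed_cohomologous_rep_up)
qed

end
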